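(* Let $a,b\in\mathbb{C}$ with $a\ne b$, let $m\ge n\ge 1$ be integers, and let $f(z)=(z-a)^m(z-b)^n$. Let $S_f$ be the rational map $$S_f(z)=z-\frac{f(z)f'(z)}{f'(z)^2-f(z)f''(z)}$$ (Schröder's method applied to $f$), and let $J_{m,n,a,b}$ denote its Julia set. Then: (1) If $m=n$, then $J_{m,m,a,b}$ is the line of points equidistant from $a$ and $b$. (2) If $m>n\ge 1$, then $J_{m,n,a,b}$ is the circle $$J_{m,n,a,b}=\left\{z\in\mathbb{C}: \left|z-\frac{b m^2-a n^2}{m^2-n^2}\right|=\frac{mn |a-b|}{m^2-n^2}\right\}.$$
   Context: $S_f$ is regarded as a rational map of the Riemann sphere (after cancelling common factors). The Julia set of a rational map is the standard one from complex dynamics (the complement of the set of points where the family of iterates is normal). *)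

theory Defs
  imports "HOL-Analysis.Analysis" "HOL-Computational_Algebra.Polynomial_Factorial" "HOL-Computational_Algebra.Field_as_Ring"
begin

text \<open>The Riemann sphere is modelled as complex option: Some z is the finite point z,
  None is the point at infinity.\<close>

definition chordal :: "complex option \<Rightarrow> complex option \<Rightarrow> real" where
  "chordal z w = (case (z, w) of
      (Some x, Some y) \<Rightarrow> 2 * cmod (x - y) / sqrt ((1 + (cmod x)^2) * (1 + (cmod y)^2))
    | (Some x, None) \<Rightarrow> 2 / sqrt (1 + (cmod x)^2)
    | (None, Some y) \<Rightarrow> 2 / sqrt (1 + (cmod y)^2)
    | (None, None) \<Rightarrow> 0)"

text \<open>Evaluation of p/q on the sphere (meaningful for coprime p, q).\<close>
definition rat_eval :: "complex poly \<Rightarrow> complex poly \<Rightarrow> complex option \<Rightarrow> complex option" where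
  "rat_eval p q z = (case z of
      Some x \<Rightarrow> (if poly q x = 0 then None else Some (poly p x / poly q x))
    | None \<Rightarrow> (if degree p > degree q then None
               else if degree p = degree q then Some (lead_coeff p / lead_coeff q)
               else Some 0))"

definition rational_map :: "complex poly \<Rightarrow> complex poly \<Rightarrow> complex option \<Rightarrow> complex option" where
  "rational_map p q = (let g = gcd p q in rat_eval (p div g) (q div g))"

definition schroeder_map :: "complex poly \<Rightarrow> complex option \<Rightarrow> complex option" where
  "schroeder_map f =
     (let Q = (pderiv f)^2 - f * pderiv (pderiv f);
          P = [:0, 1:] * Q - f * pderiv f
      in rational_map P Q)"

definition normal_at :: "(complex option \<Rightarrow> complex option) \<Rightarrow> complex option \<Rightarrow> bool" where
  "normal_at R z \<longleftrightarrow> (\<exists>r>0. \<forall>k :: nat \<Rightarrow> nat. \<exists>s g. strict_mono s \<and>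
      (\<forall>e>0. \<exists>N::nat. \<forall>j\<ge>N. \<forall>w. chordal z w < r \<longrightarrow> chordal ((R ^^ k (s j)) w) (g w) < e))"

definition julia_set :: "(complex option \<Rightarrow> complex option) \<Rightarrow> complex option set" where
  "julia_set R = {z. \<not> normal_at R z}"

end

theory Submission
  imports Defs
begin

text \<open>
  Since \<open>f'/f = m/(z - a) + n/(z - b)\<close>, Schroeder's map of \<open>f = (z - a)\<^sup>m (z - b)\<^sup>n\<close> reduces to the
  quadratic map \<open>S(z) = (m a (z - b)\<^sup>2 + n b (z - a)\<^sup>2) / (m (z - b)\<^sup>2 + n (z - a)\<^sup>2)\<close>, for which
  \<open>S(z) - a\<close> and \<open>S(z) - b\<close> are proportional to \<open>(z - a)\<^sup>2\<close> and \<open>(z - b)\<^sup>2\<close>. Hence the Moebius map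
  \<open>\<phi>(z) = \<lambda> (z - a)/(z - b)\<close> with \<open>\<lambda> = -n/m\<close> conjugates \<open>S\<close> to \<open>w \<mapsto> w\<^sup>2\<close>. Moebius maps are
  bi-Lipschitz for the chordal metric and therefore transport normality of iterates, and the Julia set
  of \<open>w \<mapsto> w\<^sup>2\<close> is the unit circle. So the Julia set of \<open>S\<close> is \<open>{z. n |z - a| = m |z - b|}\<close>:
  the bisector of \<open>a\<close> and \<open>b\<close> together with \<open>\<infinity>\<close> if \<open>m = n\<close>, and an Apollonius circle if \<open>m > n\<close>.
\<close>

section \<open>The chordal metric\<close>

lemma chordal_simps:
  "chordal (Some x) (Some y) = 2 * cmod (x - y) / (sqrt (1 + (cmod x)\<^sup>2) * sqrt (1 + (cmod y)\<^sup>2))"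
  "chordal (Some x) None = 2 / sqrt (1 + (cmod x)\<^sup>2)"
  "chordal None (Some y) = 2 / sqrt (1 + (cmod y)\<^sup>2)"
  "chordal None None = 0"
  by (simp_all add: chordal_def real_sqrt_mult)

lemma one_add_norm_power2_neq_zero [simp]: "1 + (cmod x)\<^sup>2 \<noteq> 0" "(cmod x)\<^sup>2 + 1 \<noteq> 0"
  by (simp_all add: add_nonneg_eq_0_iff add_eq_0_iff_both_eq_0)

text \<open>The chordal metric is the Euclidean distance between stereographic images on the unit sphere
  of \<open>\<complex> \<times> \<real>\<close>; this gives its metric properties.\<close>

definition stereographic :: "complex option \<Rightarrow> complex \<times> real" where
  "stereographic z = (case z of
      None \<Rightarrow> (0, 1)
    | Some x \<Rightarrow> (of_real (2 / (1 + (cmod x)\<^sup>2)) * x, ((cmod x)\<^sup>2 - 1) / (1 + (cmod x)\<^sup>2)))"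

lemma stereographic_dist_identity:
  fixes x1 x2 y1 y2 X Y :: real
  assumes X: "X = x1\<^sup>2 + x2\<^sup>2" and Y: "Y = y1\<^sup>2 + y2\<^sup>2"
  shows "(2 * x1 / (1 + X) - 2 * y1 / (1 + Y))\<^sup>2 + (2 * x2 / (1 + X) - 2 * y2 / (1 + Y))\<^sup>2
           + ((X - 1) / (1 + X) - (Y - 1) / (1 + Y))\<^sup>2
         = 4 * ((x1 - y1)\<^sup>2 + (x2 - y2)\<^sup>2) / ((1 + X) * (1 + Y))"
    and "4 * x1\<^sup>2 / (1 + X)\<^sup>2 + 4 * x2\<^sup>2 / (1 + X)\<^sup>2 + ((X - 1) / (1 + X) - 1)\<^sup>2 = 4 / (1 + X)"
proof -
  have pos: "1 + X > 0" "1 + Y > 0"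
    using X Y by (simp_all add: add_pos_nonneg)
  show "(2 * x1 / (1 + X) - 2 * y1 / (1 + Y))\<^sup>2 + (2 * x2 / (1 + X) - 2 * y2 / (1 + Y))\<^sup>2
           + ((X - 1) / (1 + X) - (Y - 1) / (1 + Y))\<^sup>2
         = 4 * ((x1 - y1)\<^sup>2 + (x2 - y2)\<^sup>2) / ((1 + X) * (1 + Y))"
    using pos by (simp add: divide_simps) (simp add: X Y power2_eq_square; algebra)
  show "4 * x1\<^sup>2 / (1 + X)\<^sup>2 + 4 * x2\<^sup>2 / (1 + X)\<^sup>2 + ((X - 1) / (1 + X) - 1)\<^sup>2 = 4 / (1 + X)"
    using pos by (simp add: divide_simps; (simp add: X power2_eq_square algebra_simps)?)
qed

lemma chordal_eq_dist_stereographic: "chordal z w = dist (stereographic z) (stereographic w)"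
proof -
  have sq: "(cmod x)\<^sup>2 = (Re x)\<^sup>2 + (Im x)\<^sup>2" for x
    by (simp add: cmod_def)
  have dist_sq: "(dist (u, s) (v, t))\<^sup>2 = (Re u - Re v)\<^sup>2 + (Im u - Im v)\<^sup>2 + (s - t)\<^sup>2"
    for u v :: complex and s t :: real
    by (simp add: dist_norm norm_Pair sq)
  have "(chordal z w)\<^sup>2 = (dist (stereographic z) (stereographic w))\<^sup>2"
    by (cases z; cases w)
       (simp_all add: chordal_def stereographic_def dist_sq power_divide sq
          stereographic_dist_identity dist_commute[of "(0::complex, 1::real)"])
  then show ?thesis
    by (simp add: chordal_def split: option.splits)
qed

lemma chordal_nonneg: "chordal z w \<ge> 0"
  by (simp add: chordal_eq_dist_stereographic)

lemma chordal_self [simp]: "chordal z z = 0"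
  by (simp add: chordal_eq_dist_stereographic)

lemma chordal_commute: "chordal z w = chordal w z"
  by (simp add: chordal_eq_dist_stereographic dist_commute)

lemma chordal_triangle: "chordal z w \<le> chordal z u + chordal u w"
  by (simp add: chordal_eq_dist_stereographic dist_triangle)

lemma chordal_Some_le: "chordal (Some x) (Some y) \<le> 2 * cmod (x - y)"
proof -
  have "1 * 1 \<le> sqrt (1 + (cmod x)\<^sup>2) * sqrt (1 + (cmod y)\<^sup>2)"
    by (intro mult_mono) simp_all
  then show ?thesis
    by (simp add: chordal_simps divide_le_eq mult_le_cancel_left1)
qed

definition chordal_ball :: "complex option \<Rightarrow> real \<Rightarrow> complex option set" where
  "chordal_ball z r = {w. chordal z w < r}"

lemma chordal_near_Some:
  assumes "chordal (Some x) w < 1 / sqrt (1 + (cmod x)\<^sup>2)"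
  obtains y where "w = Some y" "sqrt (1 + (cmod y)\<^sup>2) < 2 * sqrt (1 + (cmod x)\<^sup>2)"
proof -
  define s where "s = sqrt (1 + (cmod x)\<^sup>2)"
  have "s \<ge> 1"
    by (simp add: s_def)
  have far: "chordal (Some x) None = 2 / s"
    by (simp add: chordal_simps s_def)
  moreover have "1 / s < 2 / s"
    using \<open>s \<ge> 1\<close> by (simp add: divide_strict_right_mono)
  ultimately obtain y where y: "w = Some y"
    using assms by (cases w) (auto simp: s_def)
  define t where "t = sqrt (1 + (cmod y)\<^sup>2)"
  have "t \<ge> 1"
    by (simp add: t_def)
  have "2 / s \<le> chordal (Some x) w + 2 / t"
    using chordal_triangle[of "Some x" None w] far
    by (simp add: y chordal_commute[of None] chordal_simps t_def)
  with assms have "1 / s < 2 / t"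
    by (simp add: s_def)
  then have "t < 2 * s"
    using \<open>s \<ge> 1\<close> \<open>t \<ge> 1\<close> by (simp add: field_simps)
  with y show ?thesis
    using that by (simp add: s_def t_def)
qed

lemma chordal_ball_subset_ball:
  assumes "\<epsilon> > 0"
  obtains r where "r > 0" "chordal_ball (Some x) r \<subseteq> Some ` ball x \<epsilon>"
proof
  define s where "s = sqrt (1 + (cmod x)\<^sup>2)"
  define r where "r = min (1 / s) (\<epsilon> / s\<^sup>2)"
  have "s \<ge> 1"
    by (simp add: s_def)
  then show "r > 0"
    using assms by (simp add: r_def)
  show "chordal_ball (Some x) r \<subseteq> Some ` ball x \<epsilon>"
  proof
    fix w assume "w \<in> chordal_ball (Some x) r"
    then have w: "chordal (Some x) w < r"
      by (simp add: chordal_ball_def)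
    moreover have "r \<le> 1 / s"
      by (simp add: r_def)
    ultimately obtain y where y: "w = Some y" and bound: "sqrt (1 + (cmod y)\<^sup>2) < 2 * s"
      using chordal_near_Some[of x w] by (auto simp: s_def)
    define t where "t = sqrt (1 + (cmod y)\<^sup>2)"
    have "t \<ge> 1" "t < 2 * s"
      using bound by (simp_all add: t_def)
    have "cmod (x - y) = chordal (Some x) w * (s * t) / 2"
      using \<open>s \<ge> 1\<close> \<open>t \<ge> 1\<close> by (simp add: y chordal_simps s_def t_def field_simps)
    also have "\<dots> < r * (s * (2 * s)) / 2"
    proof -
      have "s * t < s * (2 * s)"
        using \<open>t < 2 * s\<close> \<open>s \<ge> 1\<close> by simp
      then have "chordal (Some x) w * (s * t) < r * (s * (2 * s))"
        using \<open>s \<ge> 1\<close> \<open>t \<ge> 1\<close> \<open>r > 0\<close> by (intro mult_strict_mono[OF w]) auto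
      then show ?thesis
        by simp
    qed
    also have "\<dots> \<le> \<epsilon>"
      using \<open>s \<ge> 1\<close> by (simp add: r_def power2_eq_square min_def field_simps)
    finally show "w \<in> Some ` ball x \<epsilon>"
      by (simp add: y dist_norm)
  qed
qed

section \<open>Bi-Lipschitz maps of the sphere\<close>

definition chordal_lipschitz :: "(complex option \<Rightarrow> complex option) \<Rightarrow> bool" where
  "chordal_lipschitz \<phi> \<longleftrightarrow> (\<exists>K>0. \<forall>z w. chordal (\<phi> z) (\<phi> w) \<le> K * chordal z w)"

definition chordal_bilipschitz ::
    "(complex option \<Rightarrow> complex option) \<Rightarrow> (complex option \<Rightarrow> complex option) \<Rightarrow> bool" where
  "chordal_bilipschitz \<phi> \<psi> \<longleftrightarrow>
     (\<forall>z. \<psi> (\<phi> z) = z) \<and> (\<forall>w. \<phi> (\<psi> w) = w) \<and> chordal_lipschitz \<phi> \<and> chordal_lipschitz \<psi>"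

lemma chordal_lipschitz_comp:
  assumes "chordal_lipschitz \<phi>" "chordal_lipschitz \<psi>"
  shows "chordal_lipschitz (\<phi> \<circ> \<psi>)"
proof -
  obtain K where K: "K > 0" "\<And>z w. chordal (\<phi> z) (\<phi> w) \<le> K * chordal z w"
    using assms(1) unfolding chordal_lipschitz_def by blast
  obtain K' where K': "K' > 0" "\<And>z w. chordal (\<psi> z) (\<psi> w) \<le> K' * chordal z w"
    using assms(2) unfolding chordal_lipschitz_def by blast
  have "chordal (\<phi> (\<psi> z)) (\<phi> (\<psi> w)) \<le> (K * K') * chordal z w" for z w
  proof -
    have "chordal (\<phi> (\<psi> z)) (\<phi> (\<psi> w)) \<le> K * chordal (\<psi> z) (\<psi> w)"
      by (rule K(2))
    also have "\<dots> \<le> K * (K' * chordal z w)"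
      using K(1) by (intro mult_left_mono K'(2)) simp
    finally show ?thesis
      by (simp add: mult.assoc)
  qed
  then show ?thesis
    unfolding chordal_lipschitz_def using K(1) K'(1) by (intro exI[of _ "K * K'"]) simp
qed

lemma chordal_bilipschitz_comp:
  assumes "chordal_bilipschitz \<phi> \<psi>" "chordal_bilipschitz \<phi>' \<psi>'"
  shows "chordal_bilipschitz (\<phi> \<circ> \<phi>') (\<psi>' \<circ> \<psi>)"
  using assms by (simp add: chordal_bilipschitz_def chordal_lipschitz_comp)

lemma chordal_Some_Some_le:
  assumes growth: "1 + (cmod x)\<^sup>2 \<le> C * (1 + (cmod x')\<^sup>2)" "1 + (cmod y)\<^sup>2 \<le> C * (1 + (cmod y')\<^sup>2)"
    and lipschitz: "cmod (x' - y') \<le> L * cmod (x - y)" and "L \<ge> 0"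
  shows "chordal (Some x') (Some y') \<le> L * C * chordal (Some x) (Some y)"
proof -
  define \<sigma> :: "complex \<Rightarrow> real" where "\<sigma> u = sqrt (1 + (cmod u)\<^sup>2)" for u
  have \<sigma>1: "\<sigma> u \<ge> 1" for u
    by (simp add: \<sigma>_def)
  then have \<sigma>0: "\<sigma> u > 0" for u
    using less_le_trans zero_less_one by blast
  have "0 < 1 + (cmod x)\<^sup>2" "0 < 1 + (cmod x')\<^sup>2"
    by (simp_all add: add_pos_nonneg)
  with growth(1) have "C > 0"
    by (smt (verit) zero_less_mult_iff)
  have "\<sigma> x \<le> sqrt C * \<sigma> x'" "\<sigma> y \<le> sqrt C * \<sigma> y'"
    using growth by (simp_all add: \<sigma>_def flip: real_sqrt_mult)
  then have "\<sigma> x * \<sigma> y \<le> (sqrt C * \<sigma> x') * (sqrt C * \<sigma> y')"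
    using \<sigma>0 \<open>C > 0\<close> by (intro mult_mono) (auto intro: less_imp_le)
  also have "\<dots> = C * (\<sigma> x' * \<sigma> y')"
    using \<open>C > 0\<close> by (simp add: algebra_simps flip: power2_eq_square)
  finally have \<sigma>\<sigma>: "\<sigma> x * \<sigma> y \<le> C * (\<sigma> x' * \<sigma> y')" .
  have "chordal (Some x') (Some y') * (\<sigma> x * \<sigma> y) = 2 * cmod (x' - y') * ((\<sigma> x * \<sigma> y) / (\<sigma> x' * \<sigma> y'))"
    by (simp add: chordal_simps \<sigma>_def)
  also have "\<dots> \<le> 2 * (L * cmod (x - y)) * C"
    using \<sigma>\<sigma> \<sigma>0 lipschitz \<open>L \<ge> 0\<close> by (intro mult_mono) (auto simp: divide_le_eq less_imp_le)
  finally have "chordal (Some x') (Some y') \<le> L * C * (2 * cmod (x - y)) / (\<sigma> x * \<sigma> y)"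
    using \<sigma>0 by (simp add: pos_le_divide_eq mult_ac)
  then show ?thesis
    by (simp add: chordal_simps \<sigma>_def)
qed

lemma chordal_Some_None_le:
  assumes "1 + (cmod x)\<^sup>2 \<le> C * (1 + (cmod x')\<^sup>2)"
  shows "chordal (Some x') None \<le> sqrt C * chordal (Some x) None"
proof -
  have "sqrt (1 + (cmod x)\<^sup>2) \<le> sqrt C * sqrt (1 + (cmod x')\<^sup>2)"
    using assms by (simp flip: real_sqrt_mult)
  moreover have "sqrt (1 + (cmod x)\<^sup>2) > 0" "sqrt (1 + (cmod x')\<^sup>2) > 0"
    by (simp_all add: add_pos_nonneg)
  ultimately show ?thesis
    by (simp add: chordal_simps field_simps)
qed

lemma chordal_lipschitz_map_option:
  fixes f :: "complex \<Rightarrow> complex"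
  assumes C: "C \<ge> 1" and L: "L \<ge> 0"
    and growth: "\<And>x. 1 + (cmod x)\<^sup>2 \<le> C * (1 + (cmod (f x))\<^sup>2)"
    and lipschitz: "\<And>x y. cmod (f x - f y) \<le> L * cmod (x - y)"
  shows "chordal_lipschitz (map_option f)"
proof -
  define K where "K = max 1 L * C"
  have "sqrt C * 1 \<le> sqrt C * sqrt C"
    using C by (intro mult_left_mono) auto
  then have "sqrt C \<le> C"
    using C by simp
  moreover have "1 * C \<le> K" "L * C \<le> K"
    unfolding K_def using C by (intro mult_right_mono; simp)+
  ultimately have "sqrt C \<le> K" "L * C \<le> K"
    by simp_all
  have Some_None: "chordal (Some (f x)) None \<le> K * chordal (Some x) None" for x
  proof -
    have "chordal (Some (f x)) None \<le> sqrt C * chordal (Some x) None"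
      by (rule chordal_Some_None_le[OF growth])
    also have "\<dots> \<le> K * chordal (Some x) None"
      using \<open>sqrt C \<le> K\<close> chordal_nonneg by (rule mult_right_mono)
    finally show ?thesis .
  qed
  have "chordal (map_option f z) (map_option f w) \<le> K * chordal z w" for z w
  proof (cases z; cases w)
    fix x y assume "z = Some x" "w = Some y"
    have "chordal (Some (f x)) (Some (f y)) \<le> L * C * chordal (Some x) (Some y)"
      by (rule chordal_Some_Some_le[OF growth growth lipschitz L])
    also have "\<dots> \<le> K * chordal (Some x) (Some y)"
      using \<open>L * C \<le> K\<close> chordal_nonneg by (rule mult_right_mono)
    finally show ?thesis
      by (simp add: \<open>z = Some x\<close> \<open>w = Some y\<close>)
  next
    fix y assume "z = None" "w = Some y"
    then show ?thesis
      using Some_None by (simp add: chordal_commute[of None])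
  qed (simp_all add: Some_None chordal_simps(4))
  moreover have "K > 0"
    using C by (simp add: K_def)
  ultimately show ?thesis
    unfolding chordal_lipschitz_def by blast
qed

definition sphere_affine :: "complex \<Rightarrow> complex \<Rightarrow> complex option \<Rightarrow> complex option" where
  "sphere_affine c t = map_option (\<lambda>x. c * x + t)"

lemma sphere_affine_simps [simp]:
  "sphere_affine c t (Some x) = Some (c * x + t)" "sphere_affine c t None = None"
  by (simp_all add: sphere_affine_def)

lemma chordal_lipschitz_sphere_affine:
  assumes "c \<noteq> 0"
  shows "chordal_lipschitz (sphere_affine c t)"
  unfolding sphere_affine_def
proof (rule chordal_lipschitz_map_option[where C = "1 + (2 + 2 * (cmod t)\<^sup>2) / (cmod c)\<^sup>2"])
  fix x :: complex
  define y where "y = c * x + t"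
  define B where "B = (2 + 2 * (cmod t)\<^sup>2) / (cmod c)\<^sup>2"
  have "cmod x * cmod c \<le> cmod y + cmod t"
    using norm_triangle_ineq4[of y t] by (simp add: y_def norm_mult mult.commute)
  then have "(cmod x * cmod c)\<^sup>2 \<le> (cmod y + cmod t)\<^sup>2"
    by (simp add: power_mono)
  also have "\<dots> \<le> 2 * (cmod y)\<^sup>2 + 2 * (cmod t)\<^sup>2"
    using sum_squares_bound[of "cmod y" "cmod t"] by (simp add: power2_sum)
  also have "\<dots> \<le> (2 + 2 * (cmod t)\<^sup>2) * (1 + (cmod y)\<^sup>2)"
    by (simp add: algebra_simps)
  finally have "(cmod x)\<^sup>2 * (cmod c)\<^sup>2 \<le> (2 + 2 * (cmod t)\<^sup>2) * (1 + (cmod y)\<^sup>2)"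
    by (simp add: power_mult_distrib)
  then have "(cmod x)\<^sup>2 \<le> (2 + 2 * (cmod t)\<^sup>2) * (1 + (cmod y)\<^sup>2) / (cmod c)\<^sup>2"
    using assms by (simp add: B_def pos_le_divide_eq)
  also have "\<dots> = B * (1 + (cmod y)\<^sup>2)"
    by (simp add: B_def)
  finally have "1 + (cmod x)\<^sup>2 \<le> (1 + (cmod y)\<^sup>2) + B * (1 + (cmod y)\<^sup>2)"
    using zero_le_power2[of "cmod y"] by linarith
  then show "1 + (cmod x)\<^sup>2 \<le> (1 + B) * (1 + (cmod (c * x + t))\<^sup>2)"
    by (simp add: y_def distrib_right)
next
  fix x y :: complex
  show "cmod (c * x + t - (c * y + t)) \<le> cmod c * cmod (x - y)"
    by (simp add: norm_mult flip: right_diff_distrib)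
qed simp_all

lemma chordal_bilipschitz_sphere_affine:
  assumes "c \<noteq> 0"
  shows "chordal_bilipschitz (sphere_affine c t) (sphere_affine (1 / c) (- t / c))"
proof -
  have "(c * x + t) / c - t / c = x" "c * (y / c - t / c) + t = y" for x y
    using assms by (simp_all add: diff_divide_distrib[symmetric] right_diff_distrib)
  then have "sphere_affine (1 / c) (- t / c) (sphere_affine c t z) = z"
       "sphere_affine c t (sphere_affine (1 / c) (- t / c) z) = z" for z
    by (cases z; simp)+
  then show ?thesis
    using assms by (simp add: chordal_bilipschitz_def chordal_lipschitz_sphere_affine)
qed

definition sphere_inverse :: "complex option \<Rightarrow> complex option" where
  "sphere_inverse z = (case z of None \<Rightarrow> Some 0 | Some x \<Rightarrow> if x = 0 then None else Some (1 / x))"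

lemma sphere_inverse_inverse [simp]: "sphere_inverse (sphere_inverse z) = z"
  by (auto simp: sphere_inverse_def split: option.splits)

lemma chordal_sphere_inverse: "chordal (sphere_inverse z) (sphere_inverse w) = chordal z w"
proof -
  have sq: "(chordal (Some x) (Some y))\<^sup>2 = 4 * (cmod (x - y))\<^sup>2 / ((1 + (cmod x)\<^sup>2) * (1 + (cmod y)\<^sup>2))"
    "(chordal (Some x) None)\<^sup>2 = 4 / (1 + (cmod x)\<^sup>2)"
    "(chordal None (Some x))\<^sup>2 = 4 / (1 + (cmod x)\<^sup>2)" for x y
    by (simp_all add: chordal_def power_divide power_mult_distrib)
  have "(chordal (sphere_inverse z) (sphere_inverse w))\<^sup>2 = (chordal z w)\<^sup>2"
  proof (cases z; cases w)
    fix x y assume zw: "z = Some x" "w = Some y"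
    show ?thesis
    proof (cases "x = 0"; cases "y = 0")
      assume "x \<noteq> 0" "y \<noteq> 0"
      then show ?thesis unfolding zw
        by (simp add: sphere_inverse_def sq norm_divide power_divide divide_simps)
           (simp add: norm_minus_commute algebra_simps flip: norm_mult power_mult_distrib)
    qed (auto simp: zw sphere_inverse_def sq chordal_simps(4) power_divide norm_divide divide_simps)
  qed (auto simp: sphere_inverse_def sq chordal_simps(4) power_divide norm_divide divide_simps)
  then show ?thesis
    by (rule power2_eq_imp_eq[OF _ chordal_nonneg chordal_nonneg])
qed

lemma chordal_bilipschitz_sphere_inverse: "chordal_bilipschitz sphere_inverse sphere_inverse"
  unfolding chordal_bilipschitz_def chordal_lipschitz_def
  by (auto simp: chordal_sphere_inverse intro: exI[of _ 1])

section \<open>Normality and conjugation\<close>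

definition chordal_uniform_limit :: "(nat \<Rightarrow> complex option \<Rightarrow> complex option) \<Rightarrow>
    (complex option \<Rightarrow> complex option) \<Rightarrow> complex option set \<Rightarrow> bool" where
  "chordal_uniform_limit F g A \<longleftrightarrow> (\<forall>e>0. \<exists>N. \<forall>j\<ge>N. \<forall>w\<in>A. chordal (F j w) (g w) < e)"

lemma normal_at_iff_uniform_limit:
  "normal_at R z \<longleftrightarrow> (\<exists>r>0. \<forall>k :: nat \<Rightarrow> nat. \<exists>(s :: nat \<Rightarrow> nat) g.
     strict_mono s \<and> chordal_uniform_limit (\<lambda>j. R ^^ k (s j)) g (chordal_ball z r))"
  by (simp add: normal_at_def chordal_uniform_limit_def chordal_ball_def)

lemma chordal_uniform_limit_comp_left:
  assumes "chordal_lipschitz \<psi>" "chordal_uniform_limit F g A"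
  shows "chordal_uniform_limit (\<lambda>j. \<psi> \<circ> F j) (\<psi> \<circ> g) A"
  unfolding chordal_uniform_limit_def
proof (intro allI impI)
  fix e :: real assume "e > 0"
  obtain K where K: "K > 0" "\<And>z w. chordal (\<psi> z) (\<psi> w) \<le> K * chordal z w"
    using assms(1) unfolding chordal_lipschitz_def by blast
  then obtain N where N: "\<And>j w. j \<ge> N \<Longrightarrow> w \<in> A \<Longrightarrow> chordal (F j w) (g w) < e / K"
    using assms(2) \<open>e > 0\<close> unfolding chordal_uniform_limit_def by (meson divide_pos_pos)
  have "chordal (\<psi> (F j w)) (\<psi> (g w)) < e" if "j \<ge> N" "w \<in> A" for j w
  proof -
    have "chordal (\<psi> (F j w)) (\<psi> (g w)) \<le> K * chordal (F j w) (g w)"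
      by (rule K(2))
    also have "\<dots> < K * (e / K)"
      using N[OF that] K(1) by (rule mult_strict_left_mono)
    finally show ?thesis
      using K(1) by simp
  qed
  then show "\<exists>N. \<forall>j\<ge>N. \<forall>w\<in>A. chordal ((\<psi> \<circ> F j) w) ((\<psi> \<circ> g) w) < e"
    by auto
qed

lemma chordal_uniform_limit_comp_right:
  assumes "\<phi> ` A \<subseteq> B" "chordal_uniform_limit F g B"
  shows "chordal_uniform_limit (\<lambda>j. F j \<circ> \<phi>) (g \<circ> \<phi>) A"
  using assms unfolding chordal_uniform_limit_def by (simp add: image_subset_iff) blast

lemma chordal_uniform_limit_subset:
  assumes "A \<subseteq> B" "chordal_uniform_limit F g B"
  shows "chordal_uniform_limit F g A"
  using assms unfolding chordal_uniform_limit_def by blast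

lemma chordal_uniform_limit_subseq:
  assumes "chordal_uniform_limit F g A" "filterlim k at_top sequentially"
  shows "chordal_uniform_limit (\<lambda>j. F (k j)) g A"
  unfolding chordal_uniform_limit_def
proof (intro allI impI)
  fix e :: real assume "e > 0"
  then obtain N where N: "\<And>j w. j \<ge> N \<Longrightarrow> w \<in> A \<Longrightarrow> chordal (F j w) (g w) < e"
    using assms(1) unfolding chordal_uniform_limit_def by blast
  obtain M where "\<And>j. j \<ge> M \<Longrightarrow> k j \<ge> N"
    using assms(2) unfolding filterlim_at_top eventually_sequentially by blast
  then show "\<exists>M. \<forall>j\<ge>M. \<forall>w\<in>A. chordal (F (k j) w) (g w) < e"
    using N by blast
qed

lemma chordal_lipschitz_image_ball:
  assumes "chordal_lipschitz \<phi>" "r > 0"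
  obtains r' where "r' > 0" "\<phi> ` chordal_ball z r' \<subseteq> chordal_ball (\<phi> z) r"
proof -
  obtain K where K: "K > 0" "\<And>z w. chordal (\<phi> z) (\<phi> w) \<le> K * chordal z w"
    using assms(1) unfolding chordal_lipschitz_def by blast
  have "chordal (\<phi> z) (\<phi> w) < r" if "chordal z w < r / K" for w
  proof -
    have "chordal (\<phi> z) (\<phi> w) \<le> K * chordal z w"
      by (rule K(2))
    also have "\<dots> < K * (r / K)"
      using that K(1) by (rule mult_strict_left_mono)
    finally show ?thesis
      using K(1) by simp
  qed
  then have "\<phi> ` chordal_ball z (r / K) \<subseteq> chordal_ball (\<phi> z) r"
    by (auto simp: chordal_ball_def)
  moreover have "r / K > 0"
    using K(1) assms(2) by simp
  ultimately show ?thesis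
    using that by blast
qed

lemma funpow_semiconj:
  assumes "\<phi> \<circ> S = T \<circ> \<phi>"
  shows "\<phi> \<circ> S ^^ k = T ^^ k \<circ> \<phi>"
proof (induction k)
  case (Suc k)
  then show ?case
    using assms by (simp add: fun_eq_iff)
qed simp

lemma normal_at_conj:
  assumes bilip: "chordal_bilipschitz \<phi> \<psi>" and conj: "\<phi> \<circ> S = T \<circ> \<phi>"
    and normal: "normal_at T (\<phi> z)"
  shows "normal_at S z"
proof -
  have lip: "chordal_lipschitz \<phi>" "chordal_lipschitz \<psi>"
    using bilip by (simp_all add: chordal_bilipschitz_def)
  have iter: "S ^^ i = \<psi> \<circ> (T ^^ i \<circ> \<phi>)" for i
    using bilip arg_cong[OF funpow_semiconj[OF conj], of "(\<circ>) \<psi>"]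
    by (simp add: chordal_bilipschitz_def fun_eq_iff)
  obtain r where "r > 0" and sub: "\<forall>k :: nat \<Rightarrow> nat. \<exists>(s :: nat \<Rightarrow> nat) g.
      strict_mono s \<and> chordal_uniform_limit (\<lambda>j. T ^^ k (s j)) g (chordal_ball (\<phi> z) r)"
    using normal unfolding normal_at_iff_uniform_limit by blast
  obtain r' where "r' > 0" and ball: "\<phi> ` chordal_ball z r' \<subseteq> chordal_ball (\<phi> z) r"
    using chordal_lipschitz_image_ball[OF lip(1) \<open>r > 0\<close>] by blast
  have "\<exists>(s :: nat \<Rightarrow> nat) g. strict_mono s \<and> chordal_uniform_limit (\<lambda>j. S ^^ k (s j)) g (chordal_ball z r')"
    for k :: "nat \<Rightarrow> nat"
  proof -
    obtain s :: "nat \<Rightarrow> nat" and g where "strict_mono s"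
      and "chordal_uniform_limit (\<lambda>j. T ^^ k (s j)) g (chordal_ball (\<phi> z) r)"
      using sub by blast
    then have "chordal_uniform_limit (\<lambda>j. S ^^ k (s j)) (\<psi> \<circ> (g \<circ> \<phi>)) (chordal_ball z r')"
      unfolding iter by (intro chordal_uniform_limit_comp_left[OF lip(2)] chordal_uniform_limit_comp_right[OF ball])
    with \<open>strict_mono s\<close> show ?thesis
      by blast
  qed
  with \<open>r' > 0\<close> show ?thesis
    unfolding normal_at_iff_uniform_limit by blast
qed

lemma normal_at_conj_iff:
  assumes bilip: "chordal_bilipschitz \<phi> \<psi>" and conj: "\<phi> \<circ> S = T \<circ> \<phi>"
  shows "normal_at S z \<longleftrightarrow> normal_at T (\<phi> z)"
proof
  have bilip': "chordal_bilipschitz \<psi> \<phi>"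
    using bilip by (auto simp: chordal_bilipschitz_def)
  have inv: "\<psi> (\<phi> z) = z" "\<phi> (\<psi> w) = w" for z w
    using bilip by (simp_all add: chordal_bilipschitz_def)
  have "\<psi> (T w) = S (\<psi> w)" for w
    using fun_cong[OF conj, of "\<psi> w"] inv by (metis comp_apply)
  then have conj': "\<psi> \<circ> T = S \<circ> \<psi>"
    by (simp add: fun_eq_iff)
  assume "normal_at S z"
  then show "normal_at T (\<phi> z)"
    using normal_at_conj[OF bilip' conj'] inv by simp
qed (rule normal_at_conj[OF assms])

lemma julia_set_conj:
  assumes "chordal_bilipschitz \<phi> \<psi>" "\<phi> \<circ> S = T \<circ> \<phi>"
  shows "julia_set S = \<phi> -` julia_set T"
  using normal_at_conj_iff[OF assms] by (auto simp: julia_set_def)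

lemma filterlim_at_top_if_finite_fibres:
  fixes k :: "nat \<Rightarrow> nat"
  assumes "\<And>c. finite {i. k i = c}"
  shows "filterlim k at_top sequentially"
  unfolding filterlim_at_top eventually_sequentially
proof
  fix K
  have "{i. k i < K} = (\<Union>c<K. {i. k i = c})"
    by auto
  then have "finite {i. k i < K}"
    using assms by simp
  then obtain N where "{i. k i < K} \<subseteq> {..<N}"
    using finite_nat_bounded by blast
  then show "\<exists>N. \<forall>j\<ge>N. K \<le> k j"
    by (auto simp: subset_eq not_less[symmetric])
qed

text \<open>A sequence of iteration counts either takes some value infinitely often, which gives a constant
  subsequence, or tends to infinity.\<close>

lemma normal_at_if_uniform_limit:
  assumes "r > 0" "chordal_uniform_limit (\<lambda>k. R ^^ k) g (chordal_ball z r)"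
  shows "normal_at R z"
  unfolding normal_at_iff_uniform_limit
proof (intro exI[of _ r] conjI allI)
  fix k :: "nat \<Rightarrow> nat"
  show "\<exists>(s :: nat \<Rightarrow> nat) g. strict_mono s \<and> chordal_uniform_limit (\<lambda>j. R ^^ k (s j)) g (chordal_ball z r)"
  proof (cases "\<exists>c. infinite {i. k i = c}")
    case True
    then obtain c where c: "infinite {i. k i = c}"
      by blast
    define s where "s = enumerate {i. k i = c}"
    have "strict_mono s"
      unfolding s_def by (rule strict_mono_enumerate[OF c])
    moreover have "k (s j) = c" for j
      using enumerate_in_set[OF c] unfolding s_def by blast
    then have "chordal_uniform_limit (\<lambda>j. R ^^ k (s j)) (R ^^ c) (chordal_ball z r)"
      by (simp add: chordal_uniform_limit_def)
    ultimately show ?thesis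
      by blast
  next
    case False
    then have "filterlim k at_top sequentially"
      by (intro filterlim_at_top_if_finite_fibres) blast
    from chordal_uniform_limit_subseq[OF assms(2) this]
    have "chordal_uniform_limit (\<lambda>j. R ^^ k (id j)) g (chordal_ball z r)"
      by simp
    moreover have "strict_mono (id :: nat \<Rightarrow> nat)"
      by (simp add: strict_mono_def)
    ultimately show ?thesis
      by blast
  qed
qed (fact assms(1))

section \<open>The squaring map\<close>

definition sphere_square :: "complex option \<Rightarrow> complex option" where
  "sphere_square = map_option (\<lambda>x. x\<^sup>2)"

lemma funpow_sphere_square: "(sphere_square ^^ k) (Some x) = Some (x ^ 2 ^ k)"
  by (induction k) (simp_all add: sphere_square_def power_mult[symmetric] mult.commute)

lemma sphere_inverse_square_commute: "sphere_inverse \<circ> sphere_square = sphere_square \<circ> sphere_inverse"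
  by (auto simp: fun_eq_iff sphere_square_def sphere_inverse_def power_one_over split: option.splits)

lemma chordal_uniform_limit_sphere_square_zero:
  assumes "\<rho> < 1"
  shows "chordal_uniform_limit (\<lambda>k. sphere_square ^^ k) (\<lambda>_. Some 0) (Some ` cball 0 \<rho>)"
  unfolding chordal_uniform_limit_def
proof (intro allI impI)
  fix e :: real assume "e > 0"
  then obtain K where K: "\<rho> ^ K < e / 2"
    using real_arch_pow_inv[of "e / 2" \<rho>] assms by auto
  have "chordal ((sphere_square ^^ k) (Some y)) (Some 0) < e" if "k \<ge> K" "cmod y \<le> \<rho>" for k y
  proof -
    have "\<rho> \<ge> 0"
      using that(2) norm_ge_zero order_trans by blast
    have "K \<le> 2 ^ k"
      using that(1) less_exp[of k] by linarith
    have "chordal ((sphere_square ^^ k) (Some y)) (Some 0) \<le> 2 * cmod y ^ 2 ^ k"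
      using chordal_Some_le[of "y ^ 2 ^ k" 0] by (simp add: funpow_sphere_square norm_power)
    also have "\<dots> \<le> 2 * \<rho> ^ 2 ^ k"
      using that(2) by (simp add: power_mono)
    also have "\<dots> \<le> 2 * \<rho> ^ K"
      using \<open>\<rho> \<ge> 0\<close> \<open>K \<le> 2 ^ k\<close> assms by (simp add: power_decreasing)
    finally show ?thesis
      using K by linarith
  qed
  then have "\<forall>k\<ge>K. \<forall>w\<in>Some ` cball 0 \<rho>. chordal ((sphere_square ^^ k) w) (Some 0) < e"
    by (auto simp: mem_cball_0)
  then show "\<exists>N. \<forall>k\<ge>N. \<forall>w\<in>Some ` cball 0 \<rho>. chordal ((sphere_square ^^ k) w) (Some 0) < e"
    by blast
qed

lemma normal_at_sphere_square_inside:
  assumes "cmod x < 1"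
  shows "normal_at sphere_square (Some x)"
proof -
  define \<rho> where "\<rho> = (1 + cmod x) / 2"
  obtain r where "r > 0" and r: "chordal_ball (Some x) r \<subseteq> Some ` ball x ((1 - cmod x) / 2)"
    using chordal_ball_subset_ball[of "(1 - cmod x) / 2" x] assms by auto
  have "cmod y \<le> \<rho>" if "dist x y < (1 - cmod x) / 2" for y
  proof -
    have "cmod y \<le> cmod x + dist x y"
      by (metis dist_norm norm_minus_commute norm_triangle_sub)
    with that show ?thesis
      by (simp add: \<rho>_def)
  qed
  then have "ball x ((1 - cmod x) / 2) \<subseteq> cball 0 \<rho>"
    by (auto simp: mem_cball_0)
  with r have "chordal_ball (Some x) r \<subseteq> Some ` cball 0 \<rho>"
    by blast
  moreover have "\<rho> < 1"
    using assms by (simp add: \<rho>_def)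
  ultimately have "chordal_uniform_limit (\<lambda>k. sphere_square ^^ k) (\<lambda>_. Some 0) (chordal_ball (Some x) r)"
    using chordal_uniform_limit_subset chordal_uniform_limit_sphere_square_zero by blast
  then show ?thesis
    by (rule normal_at_if_uniform_limit[OF \<open>r > 0\<close>])
qed

lemma normal_at_sphere_square_iff_inverse:
  "normal_at sphere_square z \<longleftrightarrow> normal_at sphere_square (sphere_inverse z)"
  by (rule normal_at_conj_iff[OF chordal_bilipschitz_sphere_inverse sphere_inverse_square_commute])

lemma normal_at_sphere_square_outside:
  "normal_at sphere_square None" "cmod x > 1 \<Longrightarrow> normal_at sphere_square (Some x)"
  using normal_at_sphere_square_inside[of 0] normal_at_sphere_square_inside[of "1 / x"]
  by (auto simp: normal_at_sphere_square_iff_inverse[of None] normal_at_sphere_square_iff_inverse[of "Some x"]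
      sphere_inverse_def norm_divide divide_less_eq)

lemma unit_circle_point_near_inside:
  assumes "cmod x = 1" "r > 0" "e > 0"
  obtains y where "cmod y < 1" "chordal (Some x) (Some y) < r"
    "chordal ((sphere_square ^^ k) (Some y)) ((sphere_square ^^ k) (Some x)) < e"
proof
  define P :: nat where "P = 2 ^ k"
  define \<delta> where "\<delta> = min (1 / 2) (min (r / 4) (e / (4 * real P)))"
  define y where "y = of_real (1 - \<delta>) * x"
  have "P \<ge> 1"
    by (simp add: P_def)
  have \<delta>: "\<delta> > 0" "\<delta> \<le> 1 / 2" "\<delta> \<le> r / 4" "\<delta> \<le> e / (4 * real P)"
    using assms \<open>P \<ge> 1\<close> by (auto simp: \<delta>_def)
  have norm_y: "cmod y = 1 - \<delta>"
    using assms(1) \<delta> by (simp only: y_def norm_mult norm_of_real) simp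
  show "cmod y < 1"
    using \<delta> by (simp add: norm_y)
  have "x - y = of_real \<delta> * x"
    by (simp add: y_def algebra_simps)
  then have "chordal (Some x) (Some y) \<le> 2 * \<delta>"
    using chordal_Some_le[of x y] assms(1) \<delta>(1) by (simp add: norm_mult)
  then show "chordal (Some x) (Some y) < r"
    using \<delta> assms(2) by linarith
  have "y ^ P - x ^ P = of_real ((1 - \<delta>) ^ P - 1) * x ^ P"
    unfolding y_def power_mult_distrib by (simp add: algebra_simps)
  then have "cmod (y ^ P - x ^ P) = \<bar>(1 - \<delta>) ^ P - 1\<bar>"
    using assms(1) by (simp only: norm_mult norm_power norm_of_real) simp
  also have "\<dots> = 1 - (1 - \<delta>) ^ P"
    using \<delta> by (simp add: power_le_one)
  also have "\<dots> \<le> real P * \<delta>"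
    using Bernoulli_inequality[of "- \<delta>" P] \<delta> by simp
  also have "\<dots> \<le> e / 4"
    using \<delta>(4) \<open>P \<ge> 1\<close> by (simp add: field_simps)
  finally have "chordal (Some (y ^ P)) (Some (x ^ P)) \<le> e / 2"
    using chordal_Some_le[of "y ^ P" "x ^ P"] by linarith
  then show "chordal ((sphere_square ^^ k) (Some y)) ((sphere_square ^^ k) (Some x)) < e"
    using assms(3) by (simp add: funpow_sphere_square P_def)
qed

lemma not_normal_at_sphere_square_unit_circle:
  assumes x: "cmod x = 1"
  shows "\<not> normal_at sphere_square (Some x)"
  \<comment> \<open>The orbit of \<open>x\<close> stays at chordal distance \<open>\<surd>2\<close> from \<open>0\<close>, while a point \<open>y\<close> inside the disc
     shadowing it up to time \<open>s N\<close> is eventually attracted to \<open>0\<close>; the limit \<open>g y\<close> cannot be near both.\<close>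
proof
  assume "normal_at sphere_square (Some x)"
  then obtain r s g where "r > 0" "strict_mono (s :: nat \<Rightarrow> nat)"
    and "chordal_uniform_limit (\<lambda>j. sphere_square ^^ id (s j)) g (chordal_ball (Some x) r)"
    unfolding normal_at_iff_uniform_limit by blast
  then obtain N where N: "\<And>j w. j \<ge> N \<Longrightarrow> chordal (Some x) w < r \<Longrightarrow>
      chordal ((sphere_square ^^ s j) w) (g w) < 1 / 5"
    unfolding chordal_uniform_limit_def chordal_ball_def
    by (metis (no_types, lifting) id_apply mem_Collect_eq zero_less_divide_1_iff zero_less_numeral)
  let ?x' = "(sphere_square ^^ s N) (Some x)"
  obtain y where y: "cmod y < 1" "chordal (Some x) (Some y) < r"
    and close: "chordal ((sphere_square ^^ s N) (Some y)) ?x' < 1 / 5"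
    using unit_circle_point_near_inside[OF x \<open>r > 0\<close>, of "1 / 5" "s N"] by auto
  obtain M where "\<And>k. k \<ge> M \<Longrightarrow> chordal ((sphere_square ^^ k) (Some y)) (Some 0) < 1 / 5"
    using chordal_uniform_limit_sphere_square_zero[OF y(1)]
    unfolding chordal_uniform_limit_def by (meson image_eqI mem_cball_0 order_refl zero_less_divide_1_iff zero_less_numeral)
  moreover define J where "J = max N M"
  ultimately have late: "chordal ((sphere_square ^^ s J) (Some y)) (Some 0) < 1 / 5"
    using seq_suble[OF \<open>strict_mono s\<close>, of J] by simp
  have "(chordal (Some 0) ?x')\<^sup>2 = 2"
    using x by (simp add: funpow_sphere_square chordal_simps norm_power power_divide)
  then have "chordal (Some 0) ?x' \<ge> 1"
    using chordal_nonneg by (metis one_le_numeral power2_le_imp_le power_one)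
  moreover have "chordal ((sphere_square ^^ s J) (Some y)) (g (Some y)) < 1 / 5"
    "chordal (g (Some y)) ((sphere_square ^^ s N) (Some y)) < 1 / 5"
    using N[of J "Some y"] N[of N "Some y"] y(2) by (auto simp: J_def chordal_commute[of "g (Some y)"])
  ultimately show False
    using late close chordal_commute[of "Some 0" "(sphere_square ^^ s J) (Some y)"]
      chordal_triangle[of "Some 0" ?x' "(sphere_square ^^ s J) (Some y)"]
      chordal_triangle[of "(sphere_square ^^ s J) (Some y)" ?x' "g (Some y)"]
      chordal_triangle[of "g (Some y)" ?x' "(sphere_square ^^ s N) (Some y)"]
    by linarith
qed

lemma julia_set_sphere_square: "julia_set sphere_square = Some ` {x. cmod x = 1}"
proof -
  have "normal_at sphere_square z \<longleftrightarrow> z \<notin> Some ` {x. cmod x = 1}" for z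
  proof (cases z)
    case (Some x)
    then show ?thesis
      using normal_at_sphere_square_inside[of x] normal_at_sphere_square_outside(2)[of x]
        not_normal_at_sphere_square_unit_circle[of x]
      by (cases "cmod x" "1 :: real" rule: linorder_cases) auto
  qed (simp add: normal_at_sphere_square_outside(1))
  then show ?thesis
    by (auto simp: julia_set_def)
qed

section \<open>Schroeder's map for two roots\<close>

text \<open>If \<open>f'/f = L/D\<close>, then \<open>f'\<^sup>2 - f f'' = - f\<^sup>2 (f'/f)' = f\<^sup>2 (D' L - D L') / D\<^sup>2\<close>.\<close>

lemma schroeder_log_derivative:
  fixes f D L :: "'a :: idom poly"
  assumes log_deriv: "D * pderiv f = f * L"
  defines "Q \<equiv> (pderiv f)\<^sup>2 - f * pderiv (pderiv f)"
  shows "D\<^sup>2 * Q = f\<^sup>2 * (pderiv D * L - D * pderiv L)"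
    and "D\<^sup>2 * ([:0, 1:] * Q - f * pderiv f) = f\<^sup>2 * ([:0, 1:] * (pderiv D * L - D * pderiv L) - D * L)"
proof -
  have "pderiv (D * pderiv f) = pderiv (f * L)"
    by (simp only: log_deriv)
  then have deriv2: "D * pderiv (pderiv f) = f * pderiv L + L * pderiv f - pderiv f * pderiv D"
    by (simp add: pderiv_mult algebra_simps)
  have "D\<^sup>2 * Q = (D * pderiv f)\<^sup>2 - f * D * (D * pderiv (pderiv f))"
    by (simp add: Q_def algebra_simps power2_eq_square)
  also have "\<dots> = (D * pderiv f)\<^sup>2 - f * (f * D * pderiv L + L * (D * pderiv f) - pderiv D * (D * pderiv f))"
    unfolding deriv2 by (simp add: algebra_simps)
  also have "\<dots> = (f * L)\<^sup>2 - f * (f * D * pderiv L + L * (f * L) - pderiv D * (f * L))"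
    by (simp only: log_deriv)
  also have "\<dots> = f\<^sup>2 * (pderiv D * L - D * pderiv L)"
    by (simp add: algebra_simps power2_eq_square)
  finally show Q: "D\<^sup>2 * Q = f\<^sup>2 * (pderiv D * L - D * pderiv L)" .
  have "D\<^sup>2 * ([:0, 1:] * Q - f * pderiv f) = [:0, 1:] * (D\<^sup>2 * Q) - f * D * (D * pderiv f)"
    by (simp add: algebra_simps power2_eq_square)
  also have "\<dots> = f\<^sup>2 * ([:0, 1:] * (pderiv D * L - D * pderiv L) - D * L)"
    unfolding Q log_deriv by (simp add: algebra_simps power2_eq_square)
  finally show "D\<^sup>2 * ([:0, 1:] * Q - f * pderiv f) = f\<^sup>2 * ([:0, 1:] * (pderiv D * L - D * pderiv L) - D * L)" .
qed

lemma linear_mult_pderiv_power: "[:-a, 1:] * pderiv ([:-a, 1:] ^ m) = smult (of_nat m) ([:-a, 1:] ^ m)"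
proof (cases m)
  case (Suc k)
  have "pderiv [:-a, 1:] = 1"
    by (simp add: pderiv_pCons)
  then show ?thesis
    unfolding Suc pderiv_power_Suc by (simp only: mult_1_right mult_smult_right power_Suc)
qed simp

text \<open>Numerator and denominator of Schroeder's map of \<open>(z - a)\<^sup>m (z - b)\<^sup>n\<close> after cancelling common
  factors, given by coefficients so that the value at \<open>\<infinity>\<close> can be read off.\<close>

definition schroeder_den :: "complex \<Rightarrow> complex \<Rightarrow> nat \<Rightarrow> nat \<Rightarrow> complex poly" where
  "schroeder_den a b m n =
     [: of_nat m * b\<^sup>2 + of_nat n * a\<^sup>2, -2 * (of_nat m * b + of_nat n * a), of_nat m + of_nat n :]"

definition schroeder_num :: "complex \<Rightarrow> complex \<Rightarrow> nat \<Rightarrow> nat \<Rightarrow> complex poly" where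
  "schroeder_num a b m n =
     [: a * b * (of_nat m * b + of_nat n * a), -2 * a * b * (of_nat m + of_nat n), of_nat m * a + of_nat n * b :]"

lemma poly_schroeder_den: "poly (schroeder_den a b m n) x = of_nat m * (x - b)\<^sup>2 + of_nat n * (x - a)\<^sup>2"
  by (simp add: schroeder_den_def algebra_simps power2_eq_square)

lemma poly_schroeder_num:
  "poly (schroeder_num a b m n) x = of_nat m * a * (x - b)\<^sup>2 + of_nat n * b * (x - a)\<^sup>2"
  by (simp add: schroeder_num_def algebra_simps power2_eq_square)

lemma two_roots_log_derivative:
  "[:-a, 1:] * [:-b, 1:] * pderiv ([:-a, 1:] ^ m * [:-b, 1:] ^ n)
     = [:-a, 1:] ^ m * [:-b, 1:] ^ n * (smult (of_nat m) [:-b, 1:] + smult (of_nat n) [:-a, 1:])"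
proof -
  define A B where "A = [:-a, 1:]" and "B = [:-b, 1:]"
  have "A * B * pderiv (A ^ m * B ^ n) = A ^ m * (B * pderiv (B ^ n)) * A + B ^ n * (A * pderiv (A ^ m)) * B"
    by (simp add: pderiv_mult algebra_simps)
  also have "\<dots> = A ^ m * B ^ n * (smult (of_nat m) B + smult (of_nat n) A)"
    unfolding A_def B_def linear_mult_pderiv_power by (simp add: algebra_simps flip: A_def B_def)
  finally show ?thesis
    by (simp only: A_def B_def)
qed

lemma schroeder_two_roots_factor:
  fixes a b :: complex and m n :: nat
  assumes "m \<ge> 1" "n \<ge> 1"
  defines "f \<equiv> [:-a, 1:] ^ m * [:-b, 1:] ^ n"
    and "g \<equiv> [:-a, 1:] ^ (m - 1) * [:-b, 1:] ^ (n - 1)"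
  shows "(pderiv f)\<^sup>2 - f * pderiv (pderiv f) = g\<^sup>2 * schroeder_den a b m n"
    and "[:0, 1:] * ((pderiv f)\<^sup>2 - f * pderiv (pderiv f)) - f * pderiv f = g\<^sup>2 * schroeder_num a b m n"
proof -
  define A B where "A = [:-a, 1:]" and "B = [:-b, 1:]"
  define D L where "D = A * B" and "L = smult (of_nat m) B + smult (of_nat n) A"
  have log_deriv: "D * pderiv f = f * L"
    unfolding D_def L_def f_def A_def B_def by (rule two_roots_log_derivative)
  have "pderiv D * L - D * pderiv L = schroeder_den a b m n"
    by (rule poly_eq_poly_eq_iff[THEN iffD1])
       (simp add: fun_eq_iff D_def L_def A_def B_def pderiv_mult pderiv_pCons poly_schroeder_den
         algebra_simps power2_eq_square)
  moreover have "[:0, 1:] * schroeder_den a b m n - D * L = schroeder_num a b m n"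
    by (rule poly_eq_poly_eq_iff[THEN iffD1])
       (simp add: fun_eq_iff D_def L_def A_def B_def poly_schroeder_den poly_schroeder_num
         algebra_simps power2_eq_square)
  moreover have "f\<^sup>2 = D\<^sup>2 * g\<^sup>2"
    using assms(1,2) by (cases m; cases n) (simp_all add: f_def g_def D_def power2_eq_square mult_ac flip: A_def B_def)
  ultimately have "D\<^sup>2 * ((pderiv f)\<^sup>2 - f * pderiv (pderiv f)) = D\<^sup>2 * (g\<^sup>2 * schroeder_den a b m n)"
    and "D\<^sup>2 * ([:0, 1:] * ((pderiv f)\<^sup>2 - f * pderiv (pderiv f)) - f * pderiv f)
           = D\<^sup>2 * (g\<^sup>2 * schroeder_num a b m n)"
    using schroeder_log_derivative[OF log_deriv] by (simp_all only: mult.assoc)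
  moreover have "D\<^sup>2 \<noteq> 0"
    by (simp add: D_def A_def B_def)
  ultimately show "(pderiv f)\<^sup>2 - f * pderiv (pderiv f) = g\<^sup>2 * schroeder_den a b m n"
    and "[:0, 1:] * ((pderiv f)\<^sup>2 - f * pderiv (pderiv f)) - f * pderiv f = g\<^sup>2 * schroeder_num a b m n"
    by simp_all
qed

lemma coprime_schroeder_num_den:
  assumes "a \<noteq> b" "m \<ge> 1" "n \<ge> 1"
  shows "coprime (schroeder_num a b m n) (schroeder_den a b m n)"
proof (rule coprimeI)
  fix d assume d_num: "d dvd schroeder_num a b m n" and d_den: "d dvd schroeder_den a b m n"
  define A where "A = [:-a, 1:]"
  have "schroeder_num a b m n - smult a (schroeder_den a b m n) = smult (of_nat n * (b - a)) (A\<^sup>2)"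
    by (rule poly_eq_poly_eq_iff[THEN iffD1])
       (simp add: fun_eq_iff A_def poly_schroeder_num poly_schroeder_den algebra_simps power2_eq_square)
  moreover have "d dvd schroeder_num a b m n - smult a (schroeder_den a b m n)"
    using d_num d_den by (simp add: dvd_diff dvd_smult)
  ultimately have "d dvd A\<^sup>2"
    using assms by (auto dest: dvd_smult_cancel)
  have "poly (schroeder_den a b m n) a \<noteq> 0"
    using assms by (simp add: poly_schroeder_den)
  then have "\<not> A dvd schroeder_den a b m n"
    by (simp add: A_def poly_eq_0_iff_dvd)
  then have "coprime A (schroeder_den a b m n)"
    by (intro prime_elem_imp_coprime) (simp_all add: A_def prime_elem_linear_field_poly)
  then have "coprime (A\<^sup>2) (schroeder_den a b m n)"
    by simp
  then show "is_unit d"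
    using \<open>d dvd A\<^sup>2\<close> d_den by (rule coprime_common_divisor)
qed

lemma rational_map_mult_monic:
  assumes "lead_coeff h = 1" "coprime p q"
  shows "rational_map (h * p) (h * q) = rat_eval p (q :: complex poly)"
proof -
  have "normalize h = h"
    using assms(1) by (simp add: normalize_poly_eq_map_poly)
  then have "gcd (h * p) (h * q) = h"
    using assms by (simp add: gcd_mult_left)
  moreover have "h \<noteq> 0"
    using assms(1) by auto
  ultimately show ?thesis
    by (simp add: rational_map_def)
qed

lemma rat_eval_None_degree_le:
  assumes "degree p \<le> degree q" "q \<noteq> 0"
  shows "rat_eval p q None = Some (coeff p (degree q) / lead_coeff q)"
  using assms by (auto simp: rat_eval_def le_less coeff_eq_0)

lemma schroeder_map_two_roots:
  assumes "a \<noteq> b" "m \<ge> 1" "n \<ge> 1"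
  shows "schroeder_map ([:-a, 1:] ^ m * [:-b, 1:] ^ n) = rat_eval (schroeder_num a b m n) (schroeder_den a b m n)"
proof -
  define g where "g = [:-a, 1:] ^ (m - 1) * [:-b, 1:] ^ (n - 1)"
  have "lead_coeff (g\<^sup>2) = 1"
    by (simp add: g_def lead_coeff_mult lead_coeff_power)
  then show ?thesis
    unfolding schroeder_map_def Let_def
    unfolding schroeder_two_roots_factor(2)[OF assms(2,3)]
    unfolding schroeder_two_roots_factor(1)[OF assms(2,3)]
    using rational_map_mult_monic[OF _ coprime_schroeder_num_den[OF assms]] by (simp add: g_def)
qed

section \<open>Conjugating Schroeder's map to the squaring map\<close>

definition root_ratio :: "complex \<Rightarrow> complex \<Rightarrow> complex \<Rightarrow> complex option \<Rightarrow> complex option" where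
  "root_ratio l a b = sphere_affine (l * (b - a)) l \<circ> sphere_inverse \<circ> sphere_affine 1 (- b)"

lemma root_ratio_simps:
  "root_ratio l a b None = Some l"
  "root_ratio l a b (Some x) = (if x = b then None else Some (l * (x - a) / (x - b)))"
  by (simp_all add: root_ratio_def sphere_inverse_def field_simps)

lemma chordal_bilipschitz_root_ratio:
  assumes "l \<noteq> 0" "a \<noteq> b"
  shows "\<exists>\<psi>. chordal_bilipschitz (root_ratio l a b) \<psi>"
proof -
  have "l * (b - a) \<noteq> 0"
    using assms by simp
  from chordal_bilipschitz_comp[OF
      chordal_bilipschitz_comp[OF chordal_bilipschitz_sphere_affine[OF this] chordal_bilipschitz_sphere_inverse]
      chordal_bilipschitz_sphere_affine[OF one_neq_zero]]
  show ?thesis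
    unfolding root_ratio_def by blast
qed

text \<open>For \<open>u = (x - a)\<^sup>2\<close>, \<open>v = (x - b)\<^sup>2\<close> this says \<open>\<phi>(S x) = \<phi>(x)\<^sup>2\<close>; for \<open>u = v = 1\<close> it is the
  same identity at \<open>\<infinity>\<close>.\<close>

lemma root_ratio_weighted_mean:
  fixes M N u v :: complex
  assumes "M \<noteq> 0" "v \<noteq> 0" "a \<noteq> b" "M * v + N * u \<noteq> 0"
  defines "s \<equiv> (M * a * v + N * b * u) / (M * v + N * u)"
  shows "s \<noteq> b" "- N / M * (s - a) / (s - b) = (- N / M)\<^sup>2 * u / v"
proof -
  have sa: "s - a = N * (b - a) * u / (M * v + N * u)" and sb: "s - b = M * (a - b) * v / (M * v + N * u)"
    using assms(4) by (simp_all add: s_def field_simps)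
  have "s - b \<noteq> 0"
    using assms unfolding sb by simp
  then show "s \<noteq> b"
    by simp
  have "- N / M * (s - a) / (s - b) = - N / M * (N * (b - a) * u) / (M * (a - b) * v)"
    using assms(4) by (simp add: sa sb)
  also have "\<dots> = (- N / M)\<^sup>2 * u / v"
    using assms(1-3) by (simp add: field_simps power2_eq_square)
  finally show "- N / M * (s - a) / (s - b) = (- N / M)\<^sup>2 * u / v" .
qed

lemma rat_eval_schroeder_None:
  assumes "m + n \<noteq> 0"
  shows "rat_eval (schroeder_num a b m n) (schroeder_den a b m n) None
           = Some ((of_nat m * a + of_nat n * b) / (of_nat m + of_nat n))"
proof -
  have "(of_nat m + of_nat n :: complex) \<noteq> 0"
    using assms by (simp flip: of_nat_add)
  then have deg: "degree (schroeder_num a b m n) \<le> 2" "degree (schroeder_den a b m n) = 2"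
    and coeff: "coeff (schroeder_num a b m n) 2 = of_nat m * a + of_nat n * b"
      "lead_coeff (schroeder_den a b m n) = of_nat m + of_nat n"
    by (simp_all add: schroeder_num_def schroeder_den_def numeral_2_eq_2)
  then have "schroeder_den a b m n \<noteq> 0"
    by auto
  with deg have "rat_eval (schroeder_num a b m n) (schroeder_den a b m n) None
      = Some (coeff (schroeder_num a b m n) (degree (schroeder_den a b m n)) / lead_coeff (schroeder_den a b m n))"
    by (intro rat_eval_None_degree_le) simp_all
  then show ?thesis
    using deg coeff by simp
qed

lemma root_ratio_schroeder_conj:
  assumes "a \<noteq> b" "m \<ge> 1" "n \<ge> 1"
  defines "l \<equiv> - of_nat n / of_nat m"
  shows "root_ratio l a b \<circ> rat_eval (schroeder_num a b m n) (schroeder_den a b m n)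
         = sphere_square \<circ> root_ratio l a b"
proof
  fix z
  define M N :: complex where "M = of_nat m" and "N = of_nat n"
  have "M \<noteq> 0" "N \<noteq> 0" "M + N \<noteq> 0"
    using assms(2,3) by (simp_all add: M_def N_def flip: of_nat_add)
  have l: "l = - N / M"
    by (simp add: l_def M_def N_def)
  have den: "poly (schroeder_den a b m n) x = M * (x - b)\<^sup>2 + N * (x - a)\<^sup>2" for x
    by (simp add: poly_schroeder_den M_def N_def)
  have num: "poly (schroeder_num a b m n) x = M * a * (x - b)\<^sup>2 + N * b * (x - a)\<^sup>2" for x
    by (simp add: poly_schroeder_num M_def N_def)
  show "(root_ratio l a b \<circ> rat_eval (schroeder_num a b m n) (schroeder_den a b m n)) z
        = (sphere_square \<circ> root_ratio l a b) z"
  proof (cases z)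
    case None
    have "rat_eval (schroeder_num a b m n) (schroeder_den a b m n) None
        = Some ((M * a * 1 + N * b * 1) / (M * 1 + N * 1))"
      using rat_eval_schroeder_None[of m n a b] assms(2) by (simp add: M_def N_def)
    with root_ratio_weighted_mean[where u = 1 and v = 1, OF \<open>M \<noteq> 0\<close> _ assms(1)] \<open>M + N \<noteq> 0\<close>
    show ?thesis
      by (simp add: None root_ratio_simps sphere_square_def l)
  next
    case (Some x)
    show ?thesis
    proof (cases "poly (schroeder_den a b m n) x = 0")
      case True
      then have "x \<noteq> b"
        using \<open>N \<noteq> 0\<close> assms(1) by (auto simp: den)
      have "M * (x - b)\<^sup>2 = - N * (x - a)\<^sup>2"
        using True by (simp add: den eq_neg_iff_add_eq_0)
      then have "l * (x - a)\<^sup>2 = (x - b)\<^sup>2"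
        using \<open>M \<noteq> 0\<close> by (simp add: l field_simps)
      moreover have "(l * (x - a) / (x - b))\<^sup>2 = l * (l * (x - a)\<^sup>2) / (x - b)\<^sup>2"
        by (simp add: power_divide power_mult_distrib power2_eq_square mult.assoc)
      ultimately have "(l * (x - a) / (x - b))\<^sup>2 = l"
        using \<open>x \<noteq> b\<close> by simp
      then show ?thesis
        using True \<open>x \<noteq> b\<close> by (simp add: Some rat_eval_def root_ratio_simps sphere_square_def)
    next
      case False
      then have "M * (x - b)\<^sup>2 + N * (x - a)\<^sup>2 \<noteq> 0"
        by (simp add: den)
      show ?thesis
      proof (cases "x = b")
        case True
        then show ?thesis
          using False by (simp add: Some rat_eval_def root_ratio_simps sphere_square_def num den)
      next
        case False
        then have "(x - b)\<^sup>2 \<noteq> 0"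
          by simp
        from root_ratio_weighted_mean[OF \<open>M \<noteq> 0\<close> this assms(1) \<open>M * (x - b)\<^sup>2 + N * (x - a)\<^sup>2 \<noteq> 0\<close>]
        show ?thesis
          using \<open>poly (schroeder_den a b m n) x \<noteq> 0\<close> False
          by (simp add: Some rat_eval_def root_ratio_simps sphere_square_def num den l power_divide
              power_mult_distrib)
      qed
    qed
  qed
qed

lemma root_ratio_unit_circle_iff:
  assumes "l \<noteq> 0" "a \<noteq> b"
  shows "root_ratio l a b z \<in> Some ` {y. cmod y = 1} \<longleftrightarrow>
    (case z of None \<Rightarrow> cmod l = 1 | Some x \<Rightarrow> cmod l * cmod (x - a) = cmod (x - b))"
proof (cases z)
  case (Some x)
  show ?thesis
  proof (cases "x = b")
    case False
    then have "root_ratio l a b z \<in> Some ` {y. cmod y = 1} \<longleftrightarrow> cmod (l * (x - a) / (x - b)) = 1"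
      by (auto simp: Some root_ratio_simps)
    also have "\<dots> \<longleftrightarrow> cmod l * cmod (x - a) = cmod (x - b)"
      using False by (auto simp: norm_divide norm_mult divide_eq_1_iff)
    finally show ?thesis
      by (simp add: Some)
  qed (use assms in \<open>simp add: Some root_ratio_simps\<close>)
qed (auto simp: root_ratio_simps)

lemma julia_set_schroeder_two_roots:
  assumes "a \<noteq> b" "m \<ge> 1" "n \<ge> 1"
  shows "julia_set (schroeder_map ([:-a, 1:] ^ m * [:-b, 1:] ^ n)) =
    {z. case z of None \<Rightarrow> n = m | Some x \<Rightarrow> real n * cmod (x - a) = real m * cmod (x - b)}"
proof -
  define l :: complex where "l = - of_nat n / of_nat m"
  have "l \<noteq> 0"
    using assms by (simp add: l_def)
  have norm_l: "cmod l = real n / real m"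
    by (simp add: l_def norm_divide)
  obtain \<psi> where "chordal_bilipschitz (root_ratio l a b) \<psi>"
    using chordal_bilipschitz_root_ratio[OF \<open>l \<noteq> 0\<close> assms(1)] by blast
  from julia_set_conj[OF this root_ratio_schroeder_conj[OF assms, folded l_def]]
  have "julia_set (schroeder_map ([:-a, 1:] ^ m * [:-b, 1:] ^ n)) =
      root_ratio l a b -` Some ` {y. cmod y = 1}"
    by (simp add: schroeder_map_two_roots[OF assms] julia_set_sphere_square)
  also have "\<dots> = {z. case z of None \<Rightarrow> n = m | Some x \<Rightarrow> real n * cmod (x - a) = real m * cmod (x - b)}"
    unfolding vimage_def root_ratio_unit_circle_iff[OF \<open>l \<noteq> 0\<close> assms(1)]
    using assms(2) by (auto simp: norm_l field_simps split: option.splits)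
  finally show ?thesis .
qed

lemma apollonius_circle:
  fixes a b x :: complex and p q :: real
  assumes "0 \<le> q" "q < p"
  shows "q * cmod (x - a) = p * cmod (x - b) \<longleftrightarrow>
    cmod (x - (b * of_real (p\<^sup>2) - a * of_real (q\<^sup>2)) / of_real (p\<^sup>2 - q\<^sup>2)) = p * q * cmod (a - b) / (p\<^sup>2 - q\<^sup>2)"
proof -
  define D where "D = p\<^sup>2 - q\<^sup>2"
  define W where "W = of_real D * x - (b * of_real (p\<^sup>2) - a * of_real (q\<^sup>2))"
  have "q\<^sup>2 < p\<^sup>2"
    using assms by (simp add: power_strict_mono)
  then have "D > 0"
    by (simp add: D_def)
  have center: "cmod (x - (b * of_real (p\<^sup>2) - a * of_real (q\<^sup>2)) / of_real D) = cmod W / D"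
    using \<open>D > 0\<close> by (simp add: W_def norm_divide field_simps)
  have norm_sq: "(cmod z)\<^sup>2 = (Re z)\<^sup>2 + (Im z)\<^sup>2" for z
    by (simp add: cmod_def)
  have identity: "(cmod W)\<^sup>2 - (p * q * cmod (a - b))\<^sup>2 = D * ((p * cmod (x - b))\<^sup>2 - (q * cmod (x - a))\<^sup>2)"
    unfolding norm_sq power_mult_distrib W_def D_def by (simp add: algebra_simps power2_eq_square)
  have "q * cmod (x - a) = p * cmod (x - b) \<longleftrightarrow> (q * cmod (x - a))\<^sup>2 = (p * cmod (x - b))\<^sup>2"
    using assms by (auto intro: power2_eq_imp_eq)
  also have "\<dots> \<longleftrightarrow> (cmod W)\<^sup>2 = (p * q * cmod (a - b))\<^sup>2"
    using identity \<open>D > 0\<close> by (auto simp: algebra_simps)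
  also have "\<dots> \<longleftrightarrow> cmod W = p * q * cmod (a - b)"
    using assms by (auto intro: power2_eq_imp_eq)
  also have "\<dots> \<longleftrightarrow> cmod W / D = p * q * cmod (a - b) / D"
    using \<open>D > 0\<close> by simp
  finally show ?thesis
    unfolding D_def[symmetric] center .
qed

theorem theorem2:
  fixes a b :: complex and m n :: nat
  assumes "a \<noteq> b" and "n \<ge> 1" and "m \<ge> n"
  defines "f \<equiv> [:-a, 1:] ^ m * [:-b, 1:] ^ n"
  shows "(m = n \<longrightarrow>
            julia_set (schroeder_map f) = insert None (Some ` {z. cmod (z - a) = cmod (z - b)}))
       \<and> (m > n \<longrightarrow>
            julia_set (schroeder_map f) =
              Some ` {z. cmod (z - (b * of_nat m ^ 2 - a * of_nat n ^ 2) / (of_nat m ^ 2 - of_nat n ^ 2))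
                         = real m * real n * cmod (a - b) / (real m ^ 2 - real n ^ 2)})"
proof -
  have J: "julia_set (schroeder_map f) =
      {z. case z of None \<Rightarrow> n = m | Some x \<Rightarrow> real n * cmod (x - a) = real m * cmod (x - b)}"
    unfolding f_def using assms by (intro julia_set_schroeder_two_roots) auto
  have equidistant: "julia_set (schroeder_map f) = insert None (Some ` {z. cmod (z - a) = cmod (z - b)})"
    if "m = n"
  proof (rule set_eqI)
    fix z
    show "z \<in> julia_set (schroeder_map f) \<longleftrightarrow> z \<in> insert None (Some ` {z. cmod (z - a) = cmod (z - b)})"
      using that assms(2) by (cases z) (auto simp: J)
  qed
  have circle: "julia_set (schroeder_map f) =
      Some ` {z. cmod (z - (b * of_nat m ^ 2 - a * of_nat n ^ 2) / (of_nat m ^ 2 - of_nat n ^ 2))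
                 = real m * real n * cmod (a - b) / (real m ^ 2 - real n ^ 2)}"
    if "m > n"
  proof (rule set_eqI)
    fix z
    show "z \<in> julia_set (schroeder_map f) \<longleftrightarrow> z \<in> Some ` {z. cmod (z - (b * of_nat m ^ 2 - a * of_nat n ^ 2) / (of_nat m ^ 2 - of_nat n ^ 2))
                 = real m * real n * cmod (a - b) / (real m ^ 2 - real n ^ 2)}"
      using that apollonius_circle[of "real n" "real m"] by (cases z) (auto simp: J mult.commute)
  qed
  show ?thesis
    using equidistant circle by blast
qed
end
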